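(* For an ideal $\mathcal{I}$ on $\omega$, the following are equivalent: (1) Player II has a winning strategy in the HMM game with respect to $\mathcal{I}$; (2) Player I has a winning strategy in the tallness game with respect to $\mathcal{I}$; (3) there is an infinitely branching tree $T\subseteq\omega^{<\omega}$ such that $f[\omega]\in\mathcal{I}^+$ for every $f\in[T]$; (4) $\operatorname{non}^*(\mathcal{I})=\aleph_0$.
   Context: Ideals on $\omega$ are assumed to contain all finite sets; $\mathcal{I}^+=\mathcal{P}(\omega)\setminus\mathcal{I}$. A tree is a nonempty $T\subseteq\omega^{<\omega}$ closed under initial segments; it is infinitely branching if every node has infinitely many immediate successors in $T$; $[T]=\{f\in\omega^\omega: f\upharpoonright n\in T\text{ for all }n\}$. $\operatorname{non}^*(\mathcal{I})$ is the least $|\mathcal{A}|$ for $\mathcal{A}\subseteq[\omega]^\omega$ such that for every $I\in\mathcal{I}$ there is $A\in\mathcal{A}$ with $A\cap I$ finite. Tallness game with respect to $\mathcal{I}$: at round $k$, Player I plays $n_k\in\omega$ with $n_0<n_1<\cdots$, then Player II plays $i_k\in\{0,1\}$; Player II wins iff $\{n_k: i_k=1\}$ is infinite and belongs to $\mathcal{I}$. HMM game with respect to $\mathcal{I}$: at round $k$, Player I plays a finite set $F_k\subseteq\omega$, then Player II plays $n_k\in\omega\setminus F_k$; Player I wins iff $\{n_k:k\in\omega\}\in\mathcal{I}$. *)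

theory Defs
  imports Main "HOL-Library.Countable_Set"
begin

definition is_ideal :: "nat set set \<Rightarrow> bool" where
  "is_ideal \<I> \<longleftrightarrow>
     (\<forall>A. finite A \<longrightarrow> A \<in> \<I>) \<and>
     (\<forall>A B. A \<in> \<I> \<longrightarrow> B \<subseteq> A \<longrightarrow> B \<in> \<I>) \<and>
     (\<forall>A B. A \<in> \<I> \<longrightarrow> B \<in> \<I> \<longrightarrow> A \<union> B \<in> \<I>) \<and>
     UNIV \<notin> \<I>"

text \<open>A strategy for Player I maps the list of Player II's previous
  moves to Player I's next move n_k.\<close>
definition tall_play :: "(bool list \<Rightarrow> nat) \<Rightarrow> (nat \<Rightarrow> bool) \<Rightarrow> nat \<Rightarrow> nat" where
  "tall_play \<sigma> i k = \<sigma> (map i [0..<k])"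

definition tallness_I_wins :: "nat set set \<Rightarrow> bool" where
  "tallness_I_wins \<I> \<longleftrightarrow>
     (\<exists>\<sigma>. \<forall>i :: nat \<Rightarrow> bool.
        strict_mono (tall_play \<sigma> i) \<and>
        \<not> (infinite {tall_play \<sigma> i k | k. i k} \<and> {tall_play \<sigma> i k | k. i k} \<in> \<I>))"

text \<open>A strategy for Player II maps the list of Player I's moves
  F_0,...,F_k to n_k.\<close>
definition hmm_play :: "(nat set list \<Rightarrow> nat) \<Rightarrow> (nat \<Rightarrow> nat set) \<Rightarrow> nat \<Rightarrow> nat" where
  "hmm_play \<tau> F k = \<tau> (map F [0..<Suc k])"

definition hmm_II_wins :: "nat set set \<Rightarrow> bool" where
  "hmm_II_wins \<I> \<longleftrightarrow>
     (\<exists>\<tau>. \<forall>F :: nat \<Rightarrow> nat set. (\<forall>k. finite (F k)) \<longrightarrow>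
        (\<forall>k. hmm_play \<tau> F k \<notin> F k) \<and> range (hmm_play \<tau> F) \<notin> \<I>)"

definition is_tree :: "nat list set \<Rightarrow> bool" where
  "is_tree T \<longleftrightarrow> T \<noteq> {} \<and> (\<forall>s \<in> T. \<forall>n. take n s \<in> T)"

definition inf_branching :: "nat list set \<Rightarrow> bool" where
  "inf_branching T \<longleftrightarrow> (\<forall>s \<in> T. infinite {n. s @ [n] \<in> T})"

definition branches :: "nat list set \<Rightarrow> (nat \<Rightarrow> nat) set" where
  "branches T = {f. \<forall>n. map f [0..<n] \<in> T}"

definition non_star_family :: "nat set set \<Rightarrow> nat set set \<Rightarrow> bool" where
  "non_star_family \<I> \<A> \<longleftrightarrow>
     (\<forall>A \<in> \<A>. infinite A) \<and> (\<forall>I \<in> \<I>. \<exists>A \<in> \<A>. finite (A \<inter> I))"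

text \<open>non^*(I) \<le> aleph_0: a countable witness family exists.\<close>
definition non_star_countable :: "nat set set \<Rightarrow> bool" where
  "non_star_countable \<I> \<longleftrightarrow> (\<exists>\<A>. countable \<A> \<and> non_star_family \<I> \<A>)"

end

theory Submission
  imports Defs "HOL-Library.Nat_Bijection"
begin

text \<open>
  All three conditions reduce to (4). Given a countable family \<open>\<A>\<close> witnessing
  \<open>non\<^sup>*(\<I>) = \<aleph>\<^sub>0\<close>, list it as \<open>B\<^sub>0, B\<^sub>1, \<dots>\<close> with every member repeated
  unboundedly often. Any set containing, for every \<open>c\<close>, an element of \<open>B\<^sub>c\<close> above \<open>c\<close>
  meets every member of \<open>\<A>\<close> in an infinite set and is therefore \<open>\<I>\<close>-positive. Player II
  in the HMM game answers in round \<open>k\<close> with such an element of \<open>B\<^sub>k\<close>; Player I in the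
  tallness game plays increasing elements of \<open>B\<^sub>c\<close>, where \<open>c\<close> counts the answers 1
  so far; the tree consists of all finite sequences of such choices.

  Conversely, a strategy (or tree) yields countably many infinite sets, one per position:
  the possible next moves. If some \<open>J \<in> \<I>\<close> met all of them, the opponent could keep the
  play inside \<open>J\<close> forever, so these sets witness \<open>non\<^sup>*(\<I>) = \<aleph>\<^sub>0\<close>.
\<close>

definition hmm_winning :: "nat set set \<Rightarrow> (nat set list \<Rightarrow> nat) \<Rightarrow> bool" where
  "hmm_winning \<I> \<tau> \<longleftrightarrow>
     (\<forall>F. (\<forall>k. finite (F k)) \<longrightarrow> (\<forall>k. hmm_play \<tau> F k \<notin> F k) \<and> range (hmm_play \<tau> F) \<notin> \<I>)"

definition tall_winning :: "nat set set \<Rightarrow> (bool list \<Rightarrow> nat) \<Rightarrow> bool" where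
  "tall_winning \<I> \<sigma> \<longleftrightarrow>
     (\<forall>i. strict_mono (tall_play \<sigma> i) \<and>
          \<not> (infinite (tall_play \<sigma> i ` {k. i k}) \<and> tall_play \<sigma> i ` {k. i k} \<in> \<I>))"

lemma hmm_II_wins_iff: "hmm_II_wins \<I> \<longleftrightarrow> (\<exists>\<tau>. hmm_winning \<I> \<tau>)"
  unfolding hmm_II_wins_def hmm_winning_def ..

lemma tallness_I_wins_iff: "tallness_I_wins \<I> \<longleftrightarrow> (\<exists>\<sigma>. tall_winning \<I> \<sigma>)"
  unfolding tallness_I_wins_def tall_winning_def by (simp add: setcompr_eq_image)

lemma ideal_downward_closed: "is_ideal \<I> \<Longrightarrow> J \<in> \<I> \<Longrightarrow> S \<subseteq> J \<Longrightarrow> S \<in> \<I>"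
  unfolding is_ideal_def by blast

lemma list_dependent_choice:
  assumes "P []" and "\<And>xs. P xs \<Longrightarrow> \<exists>x. P (xs @ [x])"
  obtains f where "\<And>k. P (map f [0..<k])"
proof -
  obtain g where g: "\<And>n. length (g n) = n \<and> P (g n)"
    and g_Suc: "\<And>n. \<exists>x. g (Suc n) = g n @ [x]"
    using dependent_nat_choice[of "\<lambda>n xs. length xs = n \<and> P xs" "\<lambda>n xs ys. \<exists>x. ys = xs @ [x]"]
      assms by fastforce
  have "map (\<lambda>k. g (Suc k) ! k) [0..<n] = g n" for n
  proof (induction n)
    case 0
    then show ?case using g[of 0] by simp
  next
    case (Suc n)
    obtain x where "g (Suc n) = g n @ [x]" using g_Suc by blast
    with Suc g[of n] show ?case by (simp add: nth_append)
  qed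
  then show thesis using g by (intro that[of "\<lambda>k. g (Suc k) ! k"]) simp
qed

lemma map_upt_pad:
  "map (\<lambda>k. if k < length xs then xs ! k else d) [0..<length xs + j] = xs @ replicate j d"
  by (rule nth_equalityI) (auto simp: nth_append)

lemma non_star_countableI:
  assumes "countable \<A>" and "\<forall>A \<in> \<A>. infinite A"
    and "\<And>J. J \<in> \<I> \<Longrightarrow> \<forall>A \<in> \<A>. A \<inter> J \<noteq> {} \<Longrightarrow> False"
  shows "non_star_countable \<I>"
  unfolding non_star_countable_def non_star_family_def
  using assms by (metis finite.emptyI)

lemma count_prefixes_attains:
  fixes i :: "nat \<Rightarrow> bool"
  assumes "infinite {k. i k}"
  shows "\<exists>k. i k \<and> length (filter id (map i [0..<k])) = c"
proof -
  define cnt where "cnt k = length (filter id (map i [0..<k]))" for k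
  have cnt_Suc: "cnt (Suc k) = cnt k + (if i k then 1 else 0)" for k
    by (simp add: cnt_def)
  have cnt_mono: "k \<le> k' \<Longrightarrow> cnt k \<le> cnt k'" for k k'
    by (rule lift_Suc_mono_le[of cnt]) (simp_all add: cnt_Suc)
  have "\<exists>k. c' \<le> cnt k" for c'
  proof (induction c')
    case (Suc c')
    then obtain k where "c' \<le> cnt k" by blast
    moreover obtain j where "k \<le> j" "i j"
      using assms unfolding infinite_nat_iff_unbounded_le by blast
    ultimately have "Suc c' \<le> cnt (Suc j)" using cnt_mono[of k j] cnt_Suc[of j] by simp
    then show ?case ..
  qed simp
  then obtain m where m: "c < cnt m" by (meson Suc_le_eq)
  define m0 where "m0 = (LEAST m. c < cnt m)"
  have above: "c < cnt m0" unfolding m0_def using m by (rule LeastI)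
  then obtain k where k: "m0 = Suc k" by (cases m0) (simp_all add: cnt_def)
  have "\<not> c < cnt k" unfolding m0_def by (rule not_less_Least) (simp add: m0_def[symmetric] k)
  with above k cnt_Suc[of k] show ?thesis unfolding cnt_def by (auto split: if_splits)
qed

definition diagonal_enumeration :: "nat set set \<Rightarrow> (nat \<Rightarrow> nat set) \<Rightarrow> bool" where
  "diagonal_enumeration \<I> B \<longleftrightarrow>
     (\<forall>c. infinite (B c)) \<and> (\<forall>S. (\<forall>c. \<exists>x \<in> S. x \<in> B c \<and> c \<le> x) \<longrightarrow> S \<notin> \<I>)"

lemma non_star_countable_diagonal_enumeration:
  assumes "is_ideal \<I>" and "non_star_countable \<I>"
  obtains B where "diagonal_enumeration \<I> B"
proof -
  obtain \<A> where \<A>: "countable \<A>" "non_star_family \<I> \<A>"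
    using assms(2) unfolding non_star_countable_def by blast
  have "{} \<in> \<I>" using assms(1) unfolding is_ideal_def by blast
  then have "\<A> \<noteq> {}" using \<A>(2) unfolding non_star_family_def by blast
  \<comment> \<open>the \<open>j\<close>-th member of \<open>\<A>\<close> is listed at all indices \<open>prod_encode (j, t)\<close>\<close>
  define B where "B c = from_nat_into \<A> (fst (prod_decode c))" for c
  have "infinite (B c)" for c
    using from_nat_into[OF \<open>\<A> \<noteq> {}\<close>] \<A>(2) unfolding B_def non_star_family_def by blast
  moreover have "S \<notin> \<I>" if S: "\<forall>c. \<exists>x \<in> S. x \<in> B c \<and> c \<le> x" for S
  proof
    assume "S \<in> \<I>"
    then obtain A where A: "A \<in> \<A>" "finite (A \<inter> S)"
      using \<A>(2) unfolding non_star_family_def by blast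
    obtain j where j: "from_nat_into \<A> j = A" using from_nat_into_surj[OF \<A>(1) A(1)] by blast
    obtain t where t: "A \<inter> S \<subseteq> {..<t}" using finite_nat_bounded A(2) by blast
    obtain x where "x \<in> S" "x \<in> B (prod_encode (j, t))" "prod_encode (j, t) \<le> x"
      using S by blast
    with j t le_prod_encode_2[of t j] show False by (auto simp: B_def)
  qed
  ultimately show thesis
    using that unfolding diagonal_enumeration_def by blast
qed

lemma diagonal_enumeration_range_positive:
  "diagonal_enumeration \<I> B \<Longrightarrow> (\<And>c. f c \<in> B c \<and> c \<le> f c) \<Longrightarrow> range f \<notin> \<I>"
  unfolding diagonal_enumeration_def by blast

lemma diagonal_enumeration_tree:
  assumes B: "diagonal_enumeration \<I> B"
  shows "\<exists>T. is_tree T \<and> inf_branching T \<and> (\<forall>f \<in> branches T. range f \<notin> \<I>)"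
proof (intro exI conjI)
  define T where "T = {s. \<forall>i < length s. s ! i \<in> B i \<and> i \<le> s ! i}"
  show "is_tree T" unfolding is_tree_def T_def
    by (auto simp: nth_take intro!: exI[of _ "[]"])
  show "inf_branching T" unfolding inf_branching_def
  proof
    fix s assume "s \<in> T"
    then have "B (length s) - {..<length s} \<subseteq> {n. s @ [n] \<in> T}"
      unfolding T_def by (auto simp: nth_append less_Suc_eq)
    moreover have "infinite (B (length s) - {..<length s})"
      using B unfolding diagonal_enumeration_def by auto
    ultimately show "infinite {n. s @ [n] \<in> T}" using finite_subset by blast
  qed
  show "\<forall>f \<in> branches T. range f \<notin> \<I>"
  proof
    fix f assume "f \<in> branches T"
    then have "map f [0..<Suc c] \<in> T" for c unfolding branches_def by blast
    then have "f c \<in> B c \<and> c \<le> f c" for c unfolding T_def by (fastforce simp del: upt_Suc)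
    then show "range f \<notin> \<I>" by (rule diagonal_enumeration_range_positive[OF B])
  qed
qed

lemma diagonal_enumeration_hmm_winning:
  assumes B: "diagonal_enumeration \<I> B"
  shows "hmm_winning \<I> (\<lambda>Fs. LEAST n. n \<in> B (length Fs - 1) \<and> n \<notin> last Fs \<and> length Fs - 1 \<le> n)"
    (is "hmm_winning \<I> ?\<tau>")
  unfolding hmm_winning_def
proof (intro allI impI)
  fix F :: "nat \<Rightarrow> nat set" assume fin: "\<forall>k. finite (F k)"
  have "infinite (B k - F k - {..<k})" for k
    using B fin unfolding diagonal_enumeration_def by simp
  then have "\<exists>n. n \<in> B k \<and> n \<notin> F k \<and> k \<le> n" for k
    by (metis Diff_iff finite.emptyI lessThan_iff not_le ex_in_conv)
  moreover have "hmm_play ?\<tau> F k = (LEAST n. n \<in> B k \<and> n \<notin> F k \<and> k \<le> n)" for k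
    unfolding hmm_play_def by (simp del: upt_Suc add: last_map)
  ultimately have "hmm_play ?\<tau> F k \<in> B k \<and> hmm_play ?\<tau> F k \<notin> F k \<and> k \<le> hmm_play ?\<tau> F k" for k
    by (metis (mono_tags, lifting) LeastI_ex)
  then show "(\<forall>k. hmm_play ?\<tau> F k \<notin> F k) \<and> range (hmm_play ?\<tau> F) \<notin> \<I>"
    using diagonal_enumeration_range_positive[OF B] by blast
qed

text \<open>The argument is the history of Player II's moves, most recent first.\<close>
fun diagonal_tall_strategy :: "(nat \<Rightarrow> nat set) \<Rightarrow> bool list \<Rightarrow> nat" where
  "diagonal_tall_strategy B [] = (LEAST n. n \<in> B 0)"
| "diagonal_tall_strategy B (b # bs) =
     (LEAST n. n \<in> B (length (filter id (b # bs))) \<and> diagonal_tall_strategy B bs < n)"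

lemma diagonal_tall_strategy_spec:
  assumes "\<And>c. infinite (B c)"
  shows "diagonal_tall_strategy B bs \<in> B (length (filter id bs))"
    and "diagonal_tall_strategy B bs < diagonal_tall_strategy B (b # bs)"
proof -
  have "\<exists>n. n \<in> B c \<and> m < n" for c m
    using assms[of c] unfolding infinite_nat_iff_unbounded by blast
  note least = LeastI_ex[OF this]
  show "diagonal_tall_strategy B bs \<in> B (length (filter id bs))"
  proof (cases bs)
    case Nil
    then show ?thesis using least[of 0 0] by (auto intro: LeastI)
  next
    case (Cons b' bs')
    then show ?thesis
      using least[of _ "diagonal_tall_strategy B bs'"] by (simp only: diagonal_tall_strategy.simps)
  qed
  show "diagonal_tall_strategy B bs < diagonal_tall_strategy B (b # bs)"
    using least by simp
qed

lemma diagonal_enumeration_tall_winning: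
  assumes B: "diagonal_enumeration \<I> B"
  shows "tall_winning \<I> (\<lambda>bs. diagonal_tall_strategy B (rev bs))"
    (is "tall_winning \<I> ?\<sigma>")
  unfolding tall_winning_def
proof (intro allI conjI notI)
  fix i :: "nat \<Rightarrow> bool"
  have inf: "\<And>c. infinite (B c)" using B unfolding diagonal_enumeration_def by blast
  show mono: "strict_mono (tall_play ?\<sigma> i)"
    unfolding strict_mono_Suc_iff tall_play_def
    using diagonal_tall_strategy_spec(2)[of B, OF inf] by simp
  assume H: "infinite (tall_play ?\<sigma> i ` {k. i k}) \<and> tall_play ?\<sigma> i ` {k. i k} \<in> \<I>"
  have "\<exists>x \<in> tall_play ?\<sigma> i ` {k. i k}. x \<in> B c \<and> c \<le> x" for c
  proof -
    obtain k where k: "i k" "length (filter id (map i [0..<k])) = c"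
      using count_prefixes_attains H by blast
    have count: "length (filter id (rev (map i [0..<k]))) = c"
      using k(2) by (simp only: rev_filter[symmetric] length_rev)
    have "tall_play ?\<sigma> i k \<in> B c"
      using diagonal_tall_strategy_spec(1)[of B "rev (map i [0..<k])", OF inf]
      by (simp only: tall_play_def count)
    moreover have "c \<le> k" using k(2) length_filter_le[of id "map i [0..<k]"] by simp
    moreover have "k \<le> tall_play ?\<sigma> i k" using strict_mono_imp_increasing[OF mono] .
    ultimately show ?thesis using k(1) by force
  qed
  with H show False using B unfolding diagonal_enumeration_def by blast
qed

lemma tree_non_star_countable:
  assumes "is_ideal \<I>" and "is_tree T" and "inf_branching T"
    and positive: "\<forall>f \<in> branches T. range f \<notin> \<I>"
  shows "non_star_countable \<I>"
proof (rule non_star_countableI)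
  show "countable ((\<lambda>s. {n. s @ [n] \<in> T}) ` T)" by (rule countable_image) (rule countableI_type)
  show "\<forall>A \<in> (\<lambda>s. {n. s @ [n] \<in> T}) ` T. infinite A"
    using assms(3) unfolding inf_branching_def by blast
  fix J assume J: "J \<in> \<I>" and meets: "\<forall>A \<in> (\<lambda>s. {n. s @ [n] \<in> T}) ` T. A \<inter> J \<noteq> {}"
  obtain s where "s \<in> T" using assms(2) unfolding is_tree_def by blast
  then have "take 0 s \<in> T" using assms(2) unfolding is_tree_def by blast
  then have "[] \<in> T \<and> set [] \<subseteq> J" by simp
  moreover have "\<exists>n. s @ [n] \<in> T \<and> set (s @ [n]) \<subseteq> J" if s: "s \<in> T \<and> set s \<subseteq> J" for s
  proof -
    have "{n. s @ [n] \<in> T} \<inter> J \<noteq> {}" using bspec[OF meets imageI] s by blast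
    then obtain n where "s @ [n] \<in> T" "n \<in> J" by blast
    with s show ?thesis by auto
  qed
  ultimately obtain f where f: "\<And>k. map f [0..<k] \<in> T \<and> set (map f [0..<k]) \<subseteq> J"
    using list_dependent_choice[of "\<lambda>s. s \<in> T \<and> set s \<subseteq> J"] by blast
  have "f k \<in> set (map f [0..<Suc k])" for k by simp
  then have "range f \<subseteq> J" using f by blast
  then have "range f \<in> \<I>" by (rule ideal_downward_closed[OF assms(1) J])
  moreover have "f \<in> branches T" using f unfolding branches_def by blast
  ultimately show False using positive by blast
qed

lemma hmm_winning_avoids:
  assumes "hmm_winning \<I> \<tau>" and "\<forall>G \<in> set Fs. finite G" and "finite G"
  shows "\<tau> (Fs @ [G]) \<notin> G"
proof -
  define F where "F k = (if k < length (Fs @ [G]) then (Fs @ [G]) ! k else {})" for k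
  have "map F [0..<length (Fs @ [G])] = Fs @ [G]"
    unfolding F_def using map_upt_pad[of "Fs @ [G]" "{}" 0]
    by (simp only: add_0_right replicate_0 append_Nil2)
  then have "hmm_play \<tau> F (length Fs) = \<tau> (Fs @ [G])" unfolding hmm_play_def by simp
  moreover have "\<forall>k. finite (F k)" using assms(2,3) by (simp add: F_def nth_append)
  then have "hmm_play \<tau> F (length Fs) \<notin> F (length Fs)"
    using assms(1) unfolding hmm_winning_def by blast
  moreover have "F (length Fs) = G" by (simp add: F_def)
  ultimately show ?thesis by simp
qed

lemma hmm_winning_non_star_countable:
  assumes "is_ideal \<I>" and \<tau>: "hmm_winning \<I> \<tau>"
  shows "non_star_countable \<I>"
proof (rule non_star_countableI)
  define A where "A ms = range (\<lambda>m. \<tau> (map lessThan ms @ [{..<m}]))" for ms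
  show "countable (range A)" by simp
  show "\<forall>X \<in> range A. infinite X"
  proof
    fix X assume "X \<in> range A"
    then obtain ms where X: "X = A ms" by blast
    have "m \<le> \<tau> (map lessThan ms @ [{..<m}])" for m
      using hmm_winning_avoids[OF \<tau>, of "map lessThan ms" "{..<m}"] by auto
    then show "infinite X" unfolding X A_def infinite_nat_iff_unbounded_le by blast
  qed
  fix J assume J: "J \<in> \<I>" and meets: "\<forall>X \<in> range A. X \<inter> J \<noteq> {}"
  \<comment> \<open>Player I plays initial segments \<open>{..<m}\<close> chosen so that every answer lies in \<open>J\<close>\<close>
  define P where "P ms \<longleftrightarrow> (\<forall>k < length ms. \<tau> (map lessThan (take (Suc k) ms)) \<in> J)" for ms
  have "\<exists>m. P (ms @ [m])" if "P ms" for ms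
  proof -
    obtain m where "\<tau> (map lessThan ms @ [{..<m}]) \<in> J"
      using bspec[OF meets rangeI, of ms] unfolding A_def by blast
    with that show ?thesis unfolding P_def by (auto simp: less_Suc_eq)
  qed
  moreover have "P []" unfolding P_def by simp
  ultimately obtain f where f: "\<And>k. P (map f [0..<k])"
    using list_dependent_choice[of P] by blast
  have "\<tau> (map lessThan (take (Suc k) (map f [0..<Suc k]))) \<in> J" for k
    using f[of "Suc k"] unfolding P_def by (metis diff_zero length_map length_upt lessI)
  then have "hmm_play \<tau> (\<lambda>k. {..<f k}) k \<in> J" for k
    unfolding hmm_play_def by (simp add: comp_def del: upt_Suc)
  then have "range (hmm_play \<tau> (\<lambda>k. {..<f k})) \<in> \<I>"
    using ideal_downward_closed[OF assms(1) J] by blast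
  then show False using \<tau> unfolding hmm_winning_def by auto
qed

lemma tall_winning_non_star_countable:
  assumes "is_ideal \<I>" and \<sigma>: "tall_winning \<I> \<sigma>"
  shows "non_star_countable \<I>"
proof (rule non_star_countableI)
  define A where "A p = range (\<lambda>j. \<sigma> (p @ replicate j False))" for p
  show "countable (range A)" by simp
  show "\<forall>X \<in> range A. infinite X"
  proof
    fix X assume "X \<in> range A"
    then obtain p where X: "X = A p" by blast
    define i where "i k = (if k < length p then p ! k else False)" for k
    have "tall_play \<sigma> i (length p + j) = \<sigma> (p @ replicate j False)" for j
      unfolding tall_play_def i_def by (rule arg_cong[OF map_upt_pad])
    moreover have "strict_mono (\<lambda>j. tall_play \<sigma> i (length p + j))"
      using \<sigma> unfolding tall_winning_def strict_mono_def by simp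
    ultimately have "inj (\<lambda>j. \<sigma> (p @ replicate j False))" by (simp add: strict_mono_imp_inj_on)
    then show "infinite X" unfolding X A_def by (rule range_inj_infinite)
  qed
  fix J assume J: "J \<in> \<I>" and meets: "\<forall>X \<in> range A. X \<inter> J \<noteq> {}"
  define P where "P bs \<longleftrightarrow> (\<forall>k < length bs. bs ! k \<longleftrightarrow> \<sigma> (take k bs) \<in> J)" for bs
  have "P (bs @ [\<sigma> bs \<in> J])" if "P bs" for bs
    using that unfolding P_def by (auto simp: nth_append less_Suc_eq)
  moreover have "P []" unfolding P_def by simp
  ultimately obtain i where i: "\<And>k. P (map i [0..<k])"
    using list_dependent_choice[of P] by blast
  have answer: "i k \<longleftrightarrow> tall_play \<sigma> i k \<in> J" for k
    using i[of "Suc k"] unfolding P_def tall_play_def by (simp add: nth_append take_map del: upt_Suc)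
  have "\<exists>k' \<ge> k. i k'" for k
  proof (rule ccontr)
    assume "\<not> (\<exists>k' \<ge> k. i k')"
    then have "map i [0..<k + j] = map i [0..<k] @ replicate j False" for j
      by (induction j) (simp_all add: replicate_append_same[symmetric])
    moreover obtain j where "\<sigma> (map i [0..<k] @ replicate j False) \<in> J"
      using bspec[OF meets rangeI, of "map i [0..<k]"] unfolding A_def by blast
    ultimately have "i (k + j)" using answer[of "k + j"] by (simp add: tall_play_def)
    with \<open>\<not> (\<exists>k' \<ge> k. i k')\<close> show False by simp
  qed
  then have "infinite {k. i k}" unfolding infinite_nat_iff_unbounded_le by blast
  moreover have "strict_mono (tall_play \<sigma> i)" using \<sigma> unfolding tall_winning_def by blast
  ultimately have "infinite (tall_play \<sigma> i ` {k. i k})"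
    using finite_imageD inj_on_subset[OF strict_mono_imp_inj_on] by blast
  moreover have "tall_play \<sigma> i ` {k. i k} \<in> \<I>"
    using answer by (intro ideal_downward_closed[OF assms(1) J]) blast
  ultimately show False using \<sigma> unfolding tall_winning_def by blast
qed

theorem mainTheorem14:
  fixes \<I> :: "nat set set"
  assumes "is_ideal \<I>"
  shows "(hmm_II_wins \<I> \<longleftrightarrow> tallness_I_wins \<I>) \<and>
         (tallness_I_wins \<I> \<longleftrightarrow>
            (\<exists>T. is_tree T \<and> inf_branching T \<and> (\<forall>f \<in> branches T. range f \<notin> \<I>))) \<and>
         ((\<exists>T. is_tree T \<and> inf_branching T \<and> (\<forall>f \<in> branches T. range f \<notin> \<I>)) \<longleftrightarrow>
            non_star_countable \<I>)"
proof -
  have from_non_star: "hmm_II_wins \<I> \<and> tallness_I_wins \<I> \<and>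
      (\<exists>T. is_tree T \<and> inf_branching T \<and> (\<forall>f \<in> branches T. range f \<notin> \<I>))"
    if non_star: "non_star_countable \<I>"
  proof -
    obtain B where B: "diagonal_enumeration \<I> B"
      using non_star_countable_diagonal_enumeration[OF assms non_star] .
    show ?thesis
      unfolding hmm_II_wins_iff tallness_I_wins_iff
      using diagonal_enumeration_hmm_winning[OF B] diagonal_enumeration_tall_winning[OF B]
        diagonal_enumeration_tree[OF B] by blast
  qed
  have "hmm_II_wins \<I> \<Longrightarrow> non_star_countable \<I>"
    unfolding hmm_II_wins_iff using hmm_winning_non_star_countable[OF assms] by blast
  moreover have "tallness_I_wins \<I> \<Longrightarrow> non_star_countable \<I>"
    unfolding tallness_I_wins_iff using tall_winning_non_star_countable[OF assms] by blast
  moreover have "is_tree T \<Longrightarrow> inf_branching T \<Longrightarrow> \<forall>f \<in> branches T. range f \<notin> \<I> \<Longrightarrow>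
      non_star_countable \<I>" for T
    by (rule tree_non_star_countable[OF assms])
  ultimately show ?thesis using from_non_star by blast
qed

end
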